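(* Let $\mathfrak g\xrightarrow{\mu}\mathfrak h$ be a crossed module of Lie algebras with action $\mathcal L$, let $\phi:W\to V$ be linear and $(\rho_0^1,\rho_0^0,\rho_1)$ a 2-representation on $\phi$. Then $$\bar\rho:\mathfrak g\oplus_{\mathcal L}\mathfrak h\to\mathfrak{gl}(W\oplus V),\qquad (x,y)\mapsto\begin{pmatrix}\rho_0^1(y+\mu(x)) & \rho_1(x)\\ 0 & \rho_0^0(y)\end{pmatrix}$$ (acting on column vectors $(w,v)$) is a Lie algebra representation.
   Context: A crossed module of Lie algebras consists of Lie algebras $\mathfrak g,\mathfrak h$, a Lie algebra homomorphism $\mu:\mathfrak g\to\mathfrak h$ and a Lie algebra homomorphism $\mathcal L:\mathfrak h\to\mathrm{Der}(\mathfrak g)$ with $\mu(\mathcal L_yx)=[y,\mu(x)]$ and $\mathcal L_{\mu(x_0)}x_1=[x_0,x_1]$. $\mathfrak g\oplus_{\mathcal L}\mathfrak h$ is $\mathfrak g\oplus\mathfrak h$ with bracket $[(x_0,y_0),(x_1,y_1)]=([x_0,x_1]+\mathcal L_{y_0}x_1-\mathcal L_{y_1}x_0,[y_0,y_1])$. A 2-representation on $\phi:W\to V$: linear maps $\rho_0^1:\mathfrak h\to\mathfrak{gl}(W)$, $\rho_0^0:\mathfrak h\to\mathfrak{gl}(V)$, $\rho_1:\mathfrak g\to\mathrm{Hom}(V,W)$ with $\rho_0^1,\rho_0^0$ Lie algebra representations, $\phi\rho_0^1(y)=\rho_0^0(y)\phi$, $\rho_1([x_0,x_1])=\rho_1(x_0)\phi\rho_1(x_1)-\rho_1(x_1)\phi\rho_1(x_0)$,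 $\rho_0^0(\mu(x))=\phi\rho_1(x)$, $\rho_0^1(\mu(x))=\rho_1(x)\phi$, $\rho_1(\mathcal L_yx)=\rho_0^1(y)\rho_1(x)-\rho_1(x)\rho_0^0(y)$. *)

theory Defs
  imports Complex_Main "HOL-Library.Product_Plus"
begin

definition bilinear_map ::
  "('k::field \<Rightarrow> 'a::ab_group_add \<Rightarrow> 'a) \<Rightarrow> ('k \<Rightarrow> 'b::ab_group_add \<Rightarrow> 'b)
   \<Rightarrow> ('k \<Rightarrow> 'c::ab_group_add \<Rightarrow> 'c) \<Rightarrow> ('a \<Rightarrow> 'b \<Rightarrow> 'c) \<Rightarrow> bool" where
  "bilinear_map sa sb sc f \<longleftrightarrow>
     (\<forall>x. Vector_Spaces.linear sb sc (f x)) \<and> (\<forall>y. Vector_Spaces.linear sa sc (\<lambda>x'. f x' y))"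

definition lie_algebra ::
  "('k::field \<Rightarrow> 'g::ab_group_add \<Rightarrow> 'g) \<Rightarrow> ('g \<Rightarrow> 'g \<Rightarrow> 'g) \<Rightarrow> bool" where
  "lie_algebra s br \<longleftrightarrow> vector_space s \<and> bilinear_map s s s br \<and>
     (\<forall>x. br x x = 0) \<and>
     (\<forall>x y z. br x (br y z) + br y (br z x) + br z (br x y) = 0)"

definition lie_hom ::
  "('k::field \<Rightarrow> 'g::ab_group_add \<Rightarrow> 'g) \<Rightarrow> ('g \<Rightarrow> 'g \<Rightarrow> 'g)
   \<Rightarrow> ('k \<Rightarrow> 'h::ab_group_add \<Rightarrow> 'h) \<Rightarrow> ('h \<Rightarrow> 'h \<Rightarrow> 'h) \<Rightarrow> ('g \<Rightarrow> 'h) \<Rightarrow> bool" where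
  "lie_hom sg brg sh brh f \<longleftrightarrow> Vector_Spaces.linear sg sh f \<and> (\<forall>x y. f (brg x y) = brh (f x) (f y))"

definition linear_into_hom ::
  "('k::field \<Rightarrow> 'g::ab_group_add \<Rightarrow> 'g) \<Rightarrow> ('k \<Rightarrow> 'w::ab_group_add \<Rightarrow> 'w)
   \<Rightarrow> ('k \<Rightarrow> 'v::ab_group_add \<Rightarrow> 'v) \<Rightarrow> ('g \<Rightarrow> 'w \<Rightarrow> 'v) \<Rightarrow> bool" where
  "linear_into_hom sg sw sv r \<longleftrightarrow>
     (\<forall>x. Vector_Spaces.linear sw sv (r x)) \<and> (\<forall>w. Vector_Spaces.linear sg sv (\<lambda>x. r x w))"

definition lie_rep ::
  "('k::field \<Rightarrow> 'g::ab_group_add \<Rightarrow> 'g) \<Rightarrow> ('g \<Rightarrow> 'g \<Rightarrow> 'g)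
   \<Rightarrow> ('k \<Rightarrow> 'w::ab_group_add \<Rightarrow> 'w) \<Rightarrow> ('g \<Rightarrow> 'w \<Rightarrow> 'w) \<Rightarrow> bool" where
  "lie_rep sg brg sw r \<longleftrightarrow> linear_into_hom sg sw sw r \<and>
     (\<forall>x y w. r (brg x y) w = r x (r y w) - r y (r x w))"

definition derivation ::
  "('k::field \<Rightarrow> 'g::ab_group_add \<Rightarrow> 'g) \<Rightarrow> ('g \<Rightarrow> 'g \<Rightarrow> 'g) \<Rightarrow> ('g \<Rightarrow> 'g) \<Rightarrow> bool" where
  "derivation sg brg D \<longleftrightarrow> Vector_Spaces.linear sg sg D \<and>
     (\<forall>x y. D (brg x y) = brg (D x) y + brg x (D y))"

definition crossed_module ::
  "('k::field \<Rightarrow> 'g::ab_group_add \<Rightarrow> 'g) \<Rightarrow> ('g \<Rightarrow> 'g \<Rightarrow> 'g)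
   \<Rightarrow> ('k \<Rightarrow> 'h::ab_group_add \<Rightarrow> 'h) \<Rightarrow> ('h \<Rightarrow> 'h \<Rightarrow> 'h)
   \<Rightarrow> ('g \<Rightarrow> 'h) \<Rightarrow> ('h \<Rightarrow> 'g \<Rightarrow> 'g) \<Rightarrow> bool" where
  "crossed_module sg brg sh brh mu L \<longleftrightarrow>
     lie_algebra sg brg \<and> lie_algebra sh brh \<and>
     lie_hom sg brg sh brh mu \<and>
     (\<forall>y. derivation sg brg (L y)) \<and>
     lie_rep sh brh sg L \<and>
     (\<forall>y x. mu (L y x) = brh y (mu x)) \<and>
     (\<forall>x0 x1. L (mu x0) x1 = brg x0 x1)"

definition prod_scale ::
  "('k \<Rightarrow> 'a \<Rightarrow> 'a) \<Rightarrow> ('k \<Rightarrow> 'b \<Rightarrow> 'b) \<Rightarrow> 'k \<Rightarrow> 'a \<times> 'b \<Rightarrow> 'a \<times> 'b" where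
  "prod_scale sa sb a p = (sa a (fst p), sb a (snd p))"

definition semidirect_bracket ::
  "('g::ab_group_add \<Rightarrow> 'g \<Rightarrow> 'g) \<Rightarrow> ('h \<Rightarrow> 'h \<Rightarrow> 'h) \<Rightarrow> ('h \<Rightarrow> 'g \<Rightarrow> 'g)
   \<Rightarrow> 'g \<times> 'h \<Rightarrow> 'g \<times> 'h \<Rightarrow> 'g \<times> 'h" where
  "semidirect_bracket brg brh L p q =
     (brg (fst p) (fst q) + L (snd p) (fst q) - L (snd q) (fst p), brh (snd p) (snd q))"

definition two_rep ::
  "('k::field \<Rightarrow> 'g::ab_group_add \<Rightarrow> 'g) \<Rightarrow> ('g \<Rightarrow> 'g \<Rightarrow> 'g)
   \<Rightarrow> ('k \<Rightarrow> 'h::ab_group_add \<Rightarrow> 'h) \<Rightarrow> ('h \<Rightarrow> 'h \<Rightarrow> 'h)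
   \<Rightarrow> ('g \<Rightarrow> 'h) \<Rightarrow> ('h \<Rightarrow> 'g \<Rightarrow> 'g)
   \<Rightarrow> ('k \<Rightarrow> 'w::ab_group_add \<Rightarrow> 'w) \<Rightarrow> ('k \<Rightarrow> 'v::ab_group_add \<Rightarrow> 'v) \<Rightarrow> ('w \<Rightarrow> 'v)
   \<Rightarrow> ('h \<Rightarrow> 'w \<Rightarrow> 'w) \<Rightarrow> ('h \<Rightarrow> 'v \<Rightarrow> 'v) \<Rightarrow> ('g \<Rightarrow> 'v \<Rightarrow> 'w) \<Rightarrow> bool" where
  "two_rep sg brg sh brh mu L sw sv phi r01 r00 r1 \<longleftrightarrow>
     lie_rep sh brh sw r01 \<and> lie_rep sh brh sv r00 \<and>
     linear_into_hom sg sv sw r1 \<and>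
     (\<forall>y w. phi (r01 y w) = r00 y (phi w)) \<and>
     (\<forall>x0 x1 v. r1 (brg x0 x1) v = r1 x0 (phi (r1 x1 v)) - r1 x1 (phi (r1 x0 v))) \<and>
     (\<forall>x v. r00 (mu x) v = phi (r1 x v)) \<and>
     (\<forall>x w. r01 (mu x) w = r1 x (phi w)) \<and>
     (\<forall>y x v. r1 (L y x) v = r01 y (r1 x v) - r1 x (r00 y v))"

definition rho_bar ::
  "('g \<Rightarrow> 'h::plus) \<Rightarrow> ('h \<Rightarrow> 'w::plus \<Rightarrow> 'w) \<Rightarrow> ('h \<Rightarrow> 'v \<Rightarrow> 'v) \<Rightarrow> ('g \<Rightarrow> 'v \<Rightarrow> 'w)
   \<Rightarrow> 'g \<times> 'h \<Rightarrow> 'w \<times> 'v \<Rightarrow> 'w \<times> 'v" where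
  "rho_bar mu r01 r00 r1 p u =
     (r01 (snd p + mu (fst p)) (fst u) + r1 (fst p) (snd u), r00 (snd p) (snd u))"

end

theory Submission
  imports Defs
begin

text \<open>Written as a block matrix, \<open>rho_bar\<close> is upper triangular with diagonal blocks
\<open>\<rho>\<^sub>0\<^sup>1 \<circ> \<pi>\<close> and \<open>\<rho>\<^sub>0\<^sup>0 \<circ> snd\<close>, where \<open>\<pi>(x, y) = y + \<mu>(x)\<close>.
Both \<open>\<pi>\<close> and \<open>snd\<close> are Lie algebra homomorphisms out of the semidirect product (for \<open>\<pi>\<close> this is
exactly what the crossed module axioms say), so the diagonal blocks are representations. A block
upper triangular map \<open>p \<mapsto> [[a p, b p], [0, c p]]\<close> with representations \<open>a\<close>, \<open>c\<close> on the diagonal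
is a representation as soon as the corner satisfies
\<open>b[p,q] = a p \<circ> b q + b p \<circ> c q - a q \<circ> b p - b q \<circ> c p\<close>; for \<open>b = \<rho>\<^sub>1 \<circ> fst\<close> this follows from
the 2-representation axioms for \<open>\<rho>\<^sub>1[x\<^sub>0,x\<^sub>1]\<close> and \<open>\<rho>\<^sub>1(L\<^sub>y x)\<close>, once
\<open>\<rho>\<^sub>1(x\<^sub>0) \<phi> \<rho>\<^sub>1(x\<^sub>1)\<close> is rewritten as \<open>\<rho>\<^sub>0\<^sup>1(\<mu> x\<^sub>0) \<rho>\<^sub>1(x\<^sub>1)\<close>.\<close>

definition block_triangular ::
  "('p \<Rightarrow> 'w \<Rightarrow> 'w::plus) \<Rightarrow> ('p \<Rightarrow> 'v \<Rightarrow> 'w) \<Rightarrow> ('p \<Rightarrow> 'v \<Rightarrow> 'v) \<Rightarrow> 'p \<Rightarrow> 'w \<times> 'v \<Rightarrow> 'w \<times> 'v" where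
  "block_triangular a b c p u = (a p (fst u) + b p (snd u), c p (snd u))"

lemma vector_space_prod_scale:
  assumes "vector_space sa" and "vector_space sb"
  shows "vector_space (prod_scale sa sb)"
  using assms unfolding vector_space_def prod_scale_def by simp

lemma linear_fst_prod_scale:
  assumes "vector_space sa" and "vector_space sb"
  shows "Vector_Spaces.linear (prod_scale sa sb) sa fst"
  using assms by (simp add: Vector_Spaces.linear_iff vector_space_prod_scale prod_scale_def)

lemma linear_snd_prod_scale:
  assumes "vector_space sa" and "vector_space sb"
  shows "Vector_Spaces.linear (prod_scale sa sb) sb snd"
  using assms by (simp add: Vector_Spaces.linear_iff vector_space_prod_scale prod_scale_def)

lemma linear_into_hom_comp_linear:
  assumes "Vector_Spaces.linear s1 s2 f" and "linear_into_hom s2 sv sw b"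
  shows "linear_into_hom s1 sv sw (\<lambda>x. b (f x))"
  using assms Vector_Spaces.linear_compose[OF assms(1)]
  unfolding linear_into_hom_def o_def by blast

lemma lie_rep_comp_lie_hom:
  assumes "lie_hom s1 br1 s2 br2 f" and "lie_rep s2 br2 sw r"
  shows "lie_rep s1 br1 sw (\<lambda>x. r (f x))"
  using assms linear_into_hom_comp_linear unfolding lie_rep_def lie_hom_def by metis

lemma lie_algebra_vector_space: "lie_algebra s br \<Longrightarrow> vector_space s"
  unfolding lie_algebra_def by simp

lemma lie_algebra_bracket_add:
  assumes "lie_algebra s br"
  shows "br (x + y) z = br x z + br y z" and "br x (y + z) = br x y + br x z"
  using assms unfolding lie_algebra_def bilinear_map_def Vector_Spaces.linear_iff by auto

lemma lie_algebra_bracket_antisym: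
  assumes "lie_algebra s br"
  shows "br x y = - br y x"
proof -
  have alt: "\<And>z. br z z = 0"
    using assms unfolding lie_algebra_def by auto
  have "br (x + y) (x + y) = br x x + br x y + (br y x + br y y)"
    by (simp add: lie_algebra_bracket_add[OF assms])
  then have "br x y + br y x = 0"
    by (simp add: alt)
  then show ?thesis
    by (simp add: eq_neg_iff_add_eq_0)
qed

lemma lie_hom_snd_semidirect:
  assumes "vector_space sg" and "lie_algebra sh brh"
  shows "lie_hom (prod_scale sg sh) (semidirect_bracket brg brh L) sh brh snd"
  using linear_snd_prod_scale[OF assms(1) lie_algebra_vector_space[OF assms(2)]]
  unfolding lie_hom_def by (simp add: semidirect_bracket_def)

lemma lie_rep_block_triangular:
  assumes a: "lie_rep s br sw a" and c: "lie_rep s br sv c"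
    and b: "linear_into_hom s sv sw b"
    and b_bracket: "\<And>p q v. b (br p q) v = a p (b q v) + b p (c q v) - a q (b p v) - b q (c p v)"
  shows "lie_rep s br (prod_scale sw sv) (block_triangular a b c)"
proof -
  have a_lin: "\<And>p. Vector_Spaces.linear sw sw (a p)" "\<And>w. Vector_Spaces.linear s sw (\<lambda>p. a p w)"
    and a_bracket: "\<And>p q w. a (br p q) w = a p (a q w) - a q (a p w)"
    using a unfolding lie_rep_def linear_into_hom_def by auto
  have c_lin: "\<And>p. Vector_Spaces.linear sv sv (c p)" "\<And>v. Vector_Spaces.linear s sv (\<lambda>p. c p v)"
    and c_bracket: "\<And>p q v. c (br p q) v = c p (c q v) - c q (c p v)"
    using c unfolding lie_rep_def linear_into_hom_def by auto
  have b_lin: "\<And>p. Vector_Spaces.linear sv sw (b p)" "\<And>v. Vector_Spaces.linear s sw (\<lambda>p. b p v)"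
    using b unfolding linear_into_hom_def by auto
  have sw_distrib: "sw k (w + w') = sw k w + sw k w'" for k w w'
    using a_lin(1) by (simp add: Vector_Spaces.linear_iff vector_space.vector_space_assms(1))
  have "linear_into_hom s (prod_scale sw sv) (prod_scale sw sv) (block_triangular a b c)"
    using a_lin b_lin c_lin
    by (simp add: linear_into_hom_def Vector_Spaces.linear_iff block_triangular_def prod_scale_def
        vector_space_prod_scale sw_distrib)
  moreover have "block_triangular a b c (br p q) u =
      block_triangular a b c p (block_triangular a b c q u)
    - block_triangular a b c q (block_triangular a b c p u)" for p q u
    using a_lin(1) b_lin(1) c_lin(1)
    by (simp add: block_triangular_def a_bracket b_bracket c_bracket Vector_Spaces.linear_iff)
  ultimately show ?thesis
    unfolding lie_rep_def by blast
qed

lemma lie_hom_semidirect_add_mu: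
  assumes cm: "crossed_module sg brg sh brh mu L"
  shows "lie_hom (prod_scale sg sh) (semidirect_bracket brg brh L) sh brh (\<lambda>p. snd p + mu (fst p))"
proof -
  have lah: "lie_algebra sh brh" and mu_hom: "lie_hom sg brg sh brh mu"
    and mu_L: "\<And>y x. mu (L y x) = brh y (mu x)"
    and vsg: "vector_space sg"
    using cm lie_algebra_vector_space unfolding crossed_module_def by auto
  have mu_lin: "Vector_Spaces.linear sg sh mu" and mu_br: "\<And>x x'. mu (brg x x') = brh (mu x) (mu x')"
    using mu_hom unfolding lie_hom_def by auto
  have vsh: "vector_space sh"
    using lah by (rule lie_algebra_vector_space)
  have "Vector_Spaces.linear (prod_scale sg sh) sh (\<lambda>p. snd p + mu (fst p))"
    using mu_lin vsg vsh
    by (simp add: Vector_Spaces.linear_iff vector_space_prod_scale prod_scale_def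
        vector_space.vector_space_assms(1) add_ac)
  moreover have "snd (semidirect_bracket brg brh L (x0, y0) (x1, y1))
        + mu (fst (semidirect_bracket brg brh L (x0, y0) (x1, y1)))
      = brh (y0 + mu x0) (y1 + mu x1)" for x0 y0 x1 y1
  proof -
    have "snd (semidirect_bracket brg brh L (x0, y0) (x1, y1))
        + mu (fst (semidirect_bracket brg brh L (x0, y0) (x1, y1)))
      = brh y0 y1 + mu (brg x0 x1) + mu (L y0 x1) - mu (L y1 x0)"
      using mu_lin by (simp add: semidirect_bracket_def Vector_Spaces.linear_iff
          module_hom.diff[OF mu_lin[folded module_hom_iff_linear]])
    also have "\<dots> = brh y0 y1 + brh (mu x0) (mu x1) + brh y0 (mu x1) + brh (mu x0) y1"
      by (simp add: mu_br mu_L lie_algebra_bracket_antisym[OF lah, of y1])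
    also have "\<dots> = brh (y0 + mu x0) (y1 + mu x1)"
      by (simp add: lie_algebra_bracket_add[OF lah] add_ac)
    finally show ?thesis .
  qed
  ultimately show ?thesis
    unfolding lie_hom_def by auto
qed

lemma two_rep_r1_semidirect_bracket:
  assumes "two_rep sg brg sh brh mu L sw sv phi r01 r00 r1"
  shows "r1 (fst (semidirect_bracket brg brh L p q)) v =
      r01 (snd p + mu (fst p)) (r1 (fst q) v) + r1 (fst p) (r00 (snd q) v)
    - r01 (snd q + mu (fst q)) (r1 (fst p) v) - r1 (fst q) (r00 (snd p) v)"
proof -
  obtain x0 y0 x1 y1 where pq: "p = (x0, y0)" "q = (x1, y1)"
    by fastforce
  have r1_lin: "Vector_Spaces.linear sg sw (\<lambda>x. r1 x v)"
    and r01_lin: "\<And>w. Vector_Spaces.linear sh sw (\<lambda>y. r01 y w)"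
    and r1_br: "\<And>x x' v. r1 (brg x x') v = r1 x (phi (r1 x' v)) - r1 x' (phi (r1 x v))"
    and r01_mu: "\<And>x w. r01 (mu x) w = r1 x (phi w)"
    and r1_L: "\<And>y x v. r1 (L y x) v = r01 y (r1 x v) - r1 x (r00 y v)"
    using assms unfolding two_rep_def lie_rep_def linear_into_hom_def by auto
  have "r1 (brg x0 x1 + L y0 x1 - L y1 x0) v = r1 (brg x0 x1) v + r1 (L y0 x1) v - r1 (L y1 x0) v"
    using r1_lin module_hom.diff[OF r1_lin[folded module_hom_iff_linear]]
    by (simp add: Vector_Spaces.linear_iff)
  also have "\<dots> = r01 (mu x0) (r1 x1 v) - r01 (mu x1) (r1 x0 v)
      + (r01 y0 (r1 x1 v) - r1 x1 (r00 y0 v)) - (r01 y1 (r1 x0 v) - r1 x0 (r00 y1 v))"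
    by (simp add: r1_br r1_L r01_mu)
  also have "\<dots> = r01 (y0 + mu x0) (r1 x1 v) + r1 x0 (r00 y1 v)
      - r01 (y1 + mu x1) (r1 x0 v) - r1 x1 (r00 y0 v)"
    using r01_lin by (simp add: Vector_Spaces.linear_iff algebra_simps)
  finally show ?thesis
    by (simp add: pq semidirect_bracket_def)
qed

theorem mainTheorem3:
  fixes sg :: "'k::field \<Rightarrow> 'g::ab_group_add \<Rightarrow> 'g" and brg :: "'g \<Rightarrow> 'g \<Rightarrow> 'g"
    and sh :: "'k \<Rightarrow> 'h::ab_group_add \<Rightarrow> 'h" and brh :: "'h \<Rightarrow> 'h \<Rightarrow> 'h"
    and mu :: "'g \<Rightarrow> 'h" and L :: "'h \<Rightarrow> 'g \<Rightarrow> 'g"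
    and sw :: "'k \<Rightarrow> 'w::ab_group_add \<Rightarrow> 'w" and sv :: "'k \<Rightarrow> 'v::ab_group_add \<Rightarrow> 'v"
    and phi :: "'w \<Rightarrow> 'v"
    and r01 :: "'h \<Rightarrow> 'w \<Rightarrow> 'w" and r00 :: "'h \<Rightarrow> 'v \<Rightarrow> 'v" and r1 :: "'g \<Rightarrow> 'v \<Rightarrow> 'w"
  assumes "crossed_module sg brg sh brh mu L"
    and "vector_space sw" and "vector_space sv"
    and "Vector_Spaces.linear sw sv phi"
    and "two_rep sg brg sh brh mu L sw sv phi r01 r00 r1"
  shows "lie_rep (prod_scale sg sh) (semidirect_bracket brg brh L)
           (prod_scale sw sv) (rho_bar mu r01 r00 r1)"
proof -
  note cm = assms(1) and tr = assms(5)
  have lah: "lie_algebra sh brh" and vsg: "vector_space sg" and vsh: "vector_space sh"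
    using cm lie_algebra_vector_space unfolding crossed_module_def by auto
  have r01_rep: "lie_rep sh brh sw r01" and r00_rep: "lie_rep sh brh sv r00"
    and r1_lin: "linear_into_hom sg sv sw r1"
    using tr unfolding two_rep_def by auto
  have rho_bar_eq: "rho_bar mu r01 r00 r1 =
      block_triangular (\<lambda>p. r01 (snd p + mu (fst p))) (\<lambda>p. r1 (fst p)) (\<lambda>p. r00 (snd p))"
    by (simp add: fun_eq_iff rho_bar_def block_triangular_def)
  show ?thesis
    unfolding rho_bar_eq
  proof (rule lie_rep_block_triangular)
    show "lie_rep (prod_scale sg sh) (semidirect_bracket brg brh L) sw (\<lambda>p. r01 (snd p + mu (fst p)))"
      by (rule lie_rep_comp_lie_hom[OF lie_hom_semidirect_add_mu[OF cm] r01_rep])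
    show "lie_rep (prod_scale sg sh) (semidirect_bracket brg brh L) sv (\<lambda>p. r00 (snd p))"
      by (rule lie_rep_comp_lie_hom[OF lie_hom_snd_semidirect[OF vsg lah] r00_rep])
    show "linear_into_hom (prod_scale sg sh) sv sw (\<lambda>p. r1 (fst p))"
      by (rule linear_into_hom_comp_linear[OF linear_fst_prod_scale[OF vsg vsh] r1_lin])
  qed (rule two_rep_r1_semidirect_bracket[OF tr])
qed

end
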